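(* Let $K$ be a non-degenerate Zygmund invariant kernel on $\mathbb{R}^3$ and $b\in L^1_{\mathrm{loc}}(\mathbb{R}^3)$. Then for all $1<u,t<\infty$ and all Zygmund rectangles $R$, $$\mathrm{osc}(b,R)\lesssim \mathrm{Off}_u^t\,|R|^{1/u-1/t},$$ with implicit constant depending only on $K$.
   Context: Fix $0<\theta\le 1$. For $t_1,t_2,t_3>0$ set $D_\theta(t_1,t_2,t_3) := \big(\frac{t_3}{t_1t_2}+\frac{t_1t_2}{t_3}\big)^{-\theta}$ and $S_Z(t_1,t_2,t_3) := \frac{D_\theta(t_1,t_2,t_3)}{t_1t_2t_3}$. Let $\Delta := \{(x,y) : x_i=y_i \text{ for some } i\}$. A Zygmund invariant kernel is $K:(\mathbb{R}^3\times\mathbb{R}^3)\setminus\Delta\to\mathbb{C}$ with $|K(x,y)|\lesssim S_Z(|x_1-y_1|,|x_2-y_2|,|x_3-y_3|)$ and, for some increasing $\omega:[0,1]\to[0,\infty)$ with $\omega(t)\to 0$ as $t\to0$, whenever $|x_i-x_i'|\le |x_i-y_i|/2$ ($i=1,2,3$): $|K((x_1',x_2,x_3),y)-K(x,y)| \lesssim \omega\big(\frac{|x_1-x_1'|}{|x_1-y_1|}\big) S_Z(|x_1-y_1|,|x_2-y_2|,|x_3-y_3|)$, $|K((x_1,x_2',x_3'),y)-K(x,y)| \lesssim \omega\big(\frac{|x_2-x_2'|}{|x_2-y_2|}+\frac{|x_3-x_3'|}{|x_3-y_3|}\big) S_Z(|x_1-y_1|,|x_2-y_2|,|x_3-y_3|)$,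 and the symmetric conditions in the $y$-variable. $K$ is non-degenerate if there is $c>0$ such that for every $y$ and $\delta_1,\delta_2>0$ there exists $x$ with $|x_1-y_1|>\delta_1$, $|x_2-y_2|>\delta_2$, $|x_3-y_3|>\delta_1\delta_2$ and $|K(x,y)|\ge c\,\delta_1^{-2}\delta_2^{-2}$. A Zygmund rectangle is $R=I^1\times I^2\times I^3$ (intervals) with $\ell(I^3)=\ell(I^1)\ell(I^2)$; $\mathrm{osc}(b,R):=\frac{1}{|R|}\int_R|b-\langle b\rangle_R|$. Off-diagonal constant: for $u,t\in(1,\infty)$, with $B(x,y)=b(x)-b(y)$, $$\mathrm{Off}_u^t := \sup \frac{1}{|P_1|^{1+1/u-1/t}}\Big|\iint B(x,y)K(x,y)f_1(y)f_2(x)\,dy\,dx\Big|,$$ supremum over pairs of Zygmund rectangles $P_1=J^1\times J^2\times J^3$, $P_2=L^1\times L^2\times L^3$ with $\ell(J^i)=\ell(L^i)$ and $C_0^{-1}\ell(J^i)\le\mathrm{dist}(J^i,L^i)\le C_0\ell(J^i)$ ($C_0\ge1$ a fixed constant, possibly depending on $K$), and over $f_i\in L^\infty(P_i)$ with $\|f_i\|_{L^\infty}\le1$. *)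

theory Defs
  imports "HOL-Analysis.Analysis"
begin

definition D_theta :: "real \<Rightarrow> real \<Rightarrow> real \<Rightarrow> real \<Rightarrow> real" where
  "D_theta \<theta> t1 t2 t3 = (t3 / (t1 * t2) + (t1 * t2) / t3) powr (- \<theta>)"

definition S_Z :: "real \<Rightarrow> real \<Rightarrow> real \<Rightarrow> real \<Rightarrow> real" where
  "S_Z \<theta> t1 t2 t3 = D_theta \<theta> t1 t2 t3 / (t1 * t2 * t3)"

definition SZv :: "real \<Rightarrow> real^3 \<Rightarrow> real^3 \<Rightarrow> real" where
  "SZv \<theta> x y = S_Z \<theta> \<bar>x$1 - y$1\<bar> \<bar>x$2 - y$2\<bar> \<bar>x$3 - y$3\<bar>"

definition off_Delta :: "real^3 \<Rightarrow> real^3 \<Rightarrow> bool" where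
  "off_Delta x y \<longleftrightarrow> (\<forall>i. x$i \<noteq> y$i)"

definition zygmund_kernel :: "real \<Rightarrow> (real^3 \<Rightarrow> real^3 \<Rightarrow> complex) \<Rightarrow> bool" where
  "zygmund_kernel \<theta> K \<longleftrightarrow>
    (\<exists>C>0. \<exists>\<omega>::real \<Rightarrow> real.
       mono_on {0..1} \<omega> \<and> (\<forall>s\<in>{0..1}. 0 \<le> \<omega> s) \<and> (\<omega> \<longlongrightarrow> 0) (at_right 0) \<and>
       (\<forall>x y. off_Delta x y \<longrightarrow> cmod (K x y) \<le> C * SZv \<theta> x y) \<and>
       (\<forall>x x' y. off_Delta x y \<and> (\<forall>i. \<bar>x$i - x'$i\<bar> \<le> \<bar>x$i - y$i\<bar> / 2)
          \<and> x'$2 = x$2 \<and> x'$3 = x$3 \<longrightarrow>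
          cmod (K x' y - K x y) \<le> C * \<omega> (\<bar>x$1 - x'$1\<bar> / \<bar>x$1 - y$1\<bar>) * SZv \<theta> x y) \<and>
       (\<forall>x x' y. off_Delta x y \<and> (\<forall>i. \<bar>x$i - x'$i\<bar> \<le> \<bar>x$i - y$i\<bar> / 2)
          \<and> x'$1 = x$1 \<longrightarrow>
          cmod (K x' y - K x y) \<le> C * \<omega> (\<bar>x$2 - x'$2\<bar> / \<bar>x$2 - y$2\<bar> + \<bar>x$3 - x'$3\<bar> / \<bar>x$3 - y$3\<bar>) * SZv \<theta> x y) \<and>
       (\<forall>x y y'. off_Delta x y \<and> (\<forall>i. \<bar>y$i - y'$i\<bar> \<le> \<bar>x$i - y$i\<bar> / 2)
          \<and> y'$2 = y$2 \<and> y'$3 = y$3 \<longrightarrow>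
          cmod (K x y' - K x y) \<le> C * \<omega> (\<bar>y$1 - y'$1\<bar> / \<bar>x$1 - y$1\<bar>) * SZv \<theta> x y) \<and>
       (\<forall>x y y'. off_Delta x y \<and> (\<forall>i. \<bar>y$i - y'$i\<bar> \<le> \<bar>x$i - y$i\<bar> / 2)
          \<and> y'$1 = y$1 \<longrightarrow>
          cmod (K x y' - K x y) \<le> C * \<omega> (\<bar>y$2 - y'$2\<bar> / \<bar>x$2 - y$2\<bar> + \<bar>y$3 - y'$3\<bar> / \<bar>x$3 - y$3\<bar>) * SZv \<theta> x y))"

definition non_degenerate :: "(real^3 \<Rightarrow> real^3 \<Rightarrow> complex) \<Rightarrow> bool" where
  "non_degenerate K \<longleftrightarrow>
    (\<exists>c>0. \<forall>y (\<delta>1::real) (\<delta>2::real). \<delta>1 > 0 \<and> \<delta>2 > 0 \<longrightarrow>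
       (\<exists>x. \<bar>x$1 - y$1\<bar> > \<delta>1 \<and> \<bar>x$2 - y$2\<bar> > \<delta>2 \<and> \<bar>x$3 - y$3\<bar> > \<delta>1 * \<delta>2 \<and>
            cmod (K x y) \<ge> c * \<delta>1 powr (-2) * \<delta>2 powr (-2)))"

definition zyg_rect :: "(real^3) set \<Rightarrow> bool" where
  "zyg_rect R \<longleftrightarrow> (\<exists>a b. R = cbox a b \<and> (\<forall>i. a$i < b$i) \<and>
       b$3 - a$3 = (b$1 - a$1) * (b$2 - a$2))"

definition locally_integrable :: "(real^3 \<Rightarrow> real) \<Rightarrow> bool" where
  "locally_integrable b \<longleftrightarrow> (\<forall>S. compact S \<longrightarrow> set_integrable lborel S b)"

definition avg :: "(real^3 \<Rightarrow> real) \<Rightarrow> (real^3) set \<Rightarrow> real" where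
  "avg b R = (set_lebesgue_integral lborel R b) / measure lborel R"

definition osc :: "(real^3 \<Rightarrow> real) \<Rightarrow> (real^3) set \<Rightarrow> real" where
  "osc b R = (set_lebesgue_integral lborel R (\<lambda>x. \<bar>b x - avg b R\<bar>)) / measure lborel R"

definition adm_pair :: "real \<Rightarrow> (real^3) set \<Rightarrow> (real^3) set \<Rightarrow> bool" where
  "adm_pair C0 P1 P2 \<longleftrightarrow> zyg_rect P1 \<and> zyg_rect P2 \<and>
     (\<exists>a b c d. P1 = cbox a b \<and> P2 = cbox c d \<and>
        (\<forall>i. d$i - c$i = b$i - a$i \<and>
             (b$i - a$i) / C0 \<le> setdist {a$i..b$i} {c$i..d$i} \<and>
             setdist {a$i..b$i} {c$i..d$i} \<le> C0 * (b$i - a$i)))"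

definition bil :: "(real^3 \<Rightarrow> real^3 \<Rightarrow> complex) \<Rightarrow> (real^3 \<Rightarrow> real)
    \<Rightarrow> (real^3) set \<Rightarrow> (real^3) set \<Rightarrow> (real^3 \<Rightarrow> complex) \<Rightarrow> (real^3 \<Rightarrow> complex) \<Rightarrow> complex" where
  "bil K b P1 P2 f1 f2 =
     set_lebesgue_integral lborel P2 (\<lambda>x. set_lebesgue_integral lborel P1
        (\<lambda>y. complex_of_real (b x - b y) * K x y * f1 y * f2 x))"

definition Off :: "(real^3 \<Rightarrow> real^3 \<Rightarrow> complex) \<Rightarrow> (real^3 \<Rightarrow> real) \<Rightarrow> real \<Rightarrow> real \<Rightarrow> real \<Rightarrow> ereal" where
  "Off K b C0 u t =
     (SUP (P1, P2, f1, f2) \<in> {(P1, P2, f1, f2). adm_pair C0 P1 P2 \<and>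
          f1 \<in> borel_measurable lborel \<and> f2 \<in> borel_measurable lborel \<and>
          (\<forall>y. cmod (f1 y) \<le> 1) \<and> (\<forall>x. cmod (f2 x) \<le> 1)}.
        ereal (cmod (bil K b P1 P2 f1 f2) / measure lborel P1 powr (1 + 1/u - 1/t)))"

end

theory Submission
  imports Defs
begin

(* Write R = I1 x I2 x I3 with side lengths l1, l2, l1 l2. Non-degeneracy of K at a corner a of R
   at the Zygmund scales (A l1, A l2, A^2 l1 l2) gives a point x0 with |K(x0, a)| >= c / (A^4 |R|);
   the size bound |K(x, y)| <= C / (t1 t2 t3) then forces the distances t_i = |x0_i - a_i| to be
   comparable to these scales, so the translate P of R through x0 is an admissible partner of R.
   For A large the smoothness conditions keep K within |K(x0, a)| / 2 of K(x0, a) on P x R, so after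
   a unimodular rotation the kernel has real part >= |K(x0, a)| / 2 there. Testing against the
   indicators of E = {y in R : s (b y - <b>_R) >= 0} and F = {x in P : s (b x - <b>_R) <= 0},
   with the sign s = +-1 chosen so that |F| >= |P| / 2, makes all the b(x) - b(y) of one sign, and
   the form is at least c |R| osc(b, R) / (8 A^4). *)

section \<open>Size and smoothness of Zygmund kernels\<close>

lemma D_theta_le_1:
  assumes "0 \<le> \<theta>" "0 < t1" "0 < t2" "0 < t3"
  shows "D_theta \<theta> t1 t2 t3 \<le> 1"
proof -
  define s where "s = t3 / (t1 * t2)"
  have "0 < s" using assms by (simp add: s_def)
  then have "1 \<le> s + 1 / s"
  proof (cases "s \<le> 1")
    case True
    then have "1 \<le> 1 / s" using \<open>0 < s\<close> by (simp add: field_simps)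
    then show ?thesis using \<open>0 < s\<close> by linarith
  next
    case False
    moreover have "0 < 1 / s" using \<open>0 < s\<close> by simp
    ultimately show ?thesis by linarith
  qed
  moreover have "D_theta \<theta> t1 t2 t3 = (s + 1 / s) powr (- \<theta>)"
    using assms by (simp add: D_theta_def s_def)
  ultimately show ?thesis
    using powr_mono2'[of "- \<theta>" 1 "s + 1 / s"] assms(1) by simp
qed

lemma SZv_nonneg: "0 \<le> SZv \<theta> x y"
  by (simp add: SZv_def S_Z_def D_theta_def)

lemma SZv_le_inverse_prod:
  assumes "0 \<le> \<theta>" and L: "\<And>i. 0 < L$i" "\<And>i. L$i \<le> \<bar>x$i - y$i\<bar>"
  shows "SZv \<theta> x y \<le> 1 / (L$1 * L$2 * L$3)"
proof -
  define T where "T = \<bar>x$1 - y$1\<bar> * \<bar>x$2 - y$2\<bar> * \<bar>x$3 - y$3\<bar>"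
  have pos: "0 < \<bar>x$i - y$i\<bar>" for i using L[of i] by linarith
  have "0 < T" using pos by (simp add: T_def)
  have "L$1 * L$2 * L$3 \<le> T"
    unfolding T_def using L by (intro mult_mono) (auto intro: less_imp_le)
  then have "1 / T \<le> 1 / (L$1 * L$2 * L$3)"
    using L \<open>0 < T\<close> by (intro divide_left_mono) auto
  moreover have "SZv \<theta> x y \<le> 1 / T"
    unfolding SZv_def S_Z_def T_def[symmetric]
    using D_theta_le_1[OF assms(1) pos pos pos] pos by (intro divide_right_mono) (auto simp: T_def)
  ultimately show ?thesis by linarith
qed

lemma off_Delta_of_separated:
  assumes "\<And>i. 0 < L$i" "\<And>i. L$i \<le> \<bar>p$i - q$i\<bar>"
  shows "off_Delta p q"
  unfolding off_Delta_def using assms by (metis abs_zero diff_self not_le)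

lemma abs_le_half_of_scaled:
  fixes d s L D :: real
  assumes "\<bar>d\<bar> \<le> s / 2 * L" "0 < L" "L \<le> D" "s \<le> 1"
  shows "\<bar>d\<bar> \<le> D / 2" "\<bar>d\<bar> / D \<le> s / 2"
proof -
  have "s / 2 * L \<le> L / 2" using assms by (simp add: mult_le_cancel_right1)
  then show "\<bar>d\<bar> \<le> D / 2" using assms by linarith
  have "\<bar>d\<bar> / D \<le> \<bar>d\<bar> / L" using assms by (intro divide_left_mono) auto
  also have "\<dots> \<le> s / 2" using assms by (simp add: divide_le_eq)
  finally show "\<bar>d\<bar> / D \<le> s / 2" .
qed

lemma abs_component_diff_le_dist: "\<bar>x$i - y$i\<bar> \<le> dist x y" for x y :: "real^'n"
  by (metis component_le_norm_cart dist_norm vector_minus_component)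

locale zygmund_kernel_bounds =
  fixes \<theta> :: real and K :: "real^3 \<Rightarrow> real^3 \<Rightarrow> complex" and C :: real and \<omega> :: "real \<Rightarrow> real"
  assumes theta_pos: "0 < \<theta>" and C_pos: "0 < C"
    and \<omega>_mono: "mono_on {0..1} \<omega>" and \<omega>_nonneg: "\<And>s. s \<in> {0..1} \<Longrightarrow> 0 \<le> \<omega> s"
    and \<omega>_tendsto_0: "(\<omega> \<longlongrightarrow> 0) (at_right 0)"
    and size: "\<And>x y. off_Delta x y \<Longrightarrow> cmod (K x y) \<le> C * SZv \<theta> x y"
    and smooth_x1: "\<And>x x' y. off_Delta x y \<Longrightarrow> \<forall>i. \<bar>x$i - x'$i\<bar> \<le> \<bar>x$i - y$i\<bar> / 2 \<Longrightarrow>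
          x'$2 = x$2 \<Longrightarrow> x'$3 = x$3 \<Longrightarrow>
          cmod (K x' y - K x y) \<le> C * \<omega> (\<bar>x$1 - x'$1\<bar> / \<bar>x$1 - y$1\<bar>) * SZv \<theta> x y"
    and smooth_x23: "\<And>x x' y. off_Delta x y \<Longrightarrow> \<forall>i. \<bar>x$i - x'$i\<bar> \<le> \<bar>x$i - y$i\<bar> / 2 \<Longrightarrow>
          x'$1 = x$1 \<Longrightarrow>
          cmod (K x' y - K x y)
            \<le> C * \<omega> (\<bar>x$2 - x'$2\<bar> / \<bar>x$2 - y$2\<bar> + \<bar>x$3 - x'$3\<bar> / \<bar>x$3 - y$3\<bar>) * SZv \<theta> x y"
    and smooth_y1: "\<And>x y y'. off_Delta x y \<Longrightarrow> \<forall>i. \<bar>y$i - y'$i\<bar> \<le> \<bar>x$i - y$i\<bar> / 2 \<Longrightarrow>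
          y'$2 = y$2 \<Longrightarrow> y'$3 = y$3 \<Longrightarrow>
          cmod (K x y' - K x y) \<le> C * \<omega> (\<bar>y$1 - y'$1\<bar> / \<bar>x$1 - y$1\<bar>) * SZv \<theta> x y"
    and smooth_y23: "\<And>x y y'. off_Delta x y \<Longrightarrow> \<forall>i. \<bar>y$i - y'$i\<bar> \<le> \<bar>x$i - y$i\<bar> / 2 \<Longrightarrow>
          y'$1 = y$1 \<Longrightarrow>
          cmod (K x y' - K x y)
            \<le> C * \<omega> (\<bar>y$2 - y'$2\<bar> / \<bar>x$2 - y$2\<bar> + \<bar>y$3 - y'$3\<bar> / \<bar>x$3 - y$3\<bar>) * SZv \<theta> x y"

lemma zygmund_kernel_boundsE:
  assumes "0 < \<theta>" "zygmund_kernel \<theta> K"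
  obtains C \<omega> where "zygmund_kernel_bounds \<theta> K C \<omega>"
  using assms unfolding zygmund_kernel_def zygmund_kernel_bounds_def
  apply (elim exE conjE)
  subgoal for C \<omega> by (intro that[of C \<omega>]) (unfold_locales; blast)
  done

context zygmund_kernel_bounds
begin

lemma \<omega>_eventually_less:
  assumes "0 < \<epsilon>"
  obtains \<eta> where "0 < \<eta>" "\<And>s. 0 < s \<Longrightarrow> s < \<eta> \<Longrightarrow> \<omega> s < \<epsilon>"
proof -
  have "eventually (\<lambda>s. dist (\<omega> s) 0 < \<epsilon>) (at_right 0)"
    using tendstoD[OF \<omega>_tendsto_0 assms] .
  then obtain \<eta> where "0 < \<eta>" "\<And>s. 0 < s \<Longrightarrow> s < \<eta> \<Longrightarrow> dist (\<omega> s) 0 < \<epsilon>"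
    unfolding eventually_at_right_field by auto
  then show ?thesis
    using that by (metis abs_less_iff dist_real_def diff_zero)
qed

lemma exists_scale_small_modulus:
  assumes "0 < \<epsilon>"
  obtains A where "4 \<le> A" "\<omega> (4 / A) < \<epsilon>"
proof -
  obtain \<eta> where "0 < \<eta>" and \<eta>: "\<And>s. 0 < s \<Longrightarrow> s < \<eta> \<Longrightarrow> \<omega> s < \<epsilon>"
    using \<omega>_eventually_less[OF assms] by blast
  define A where "A = max 4 (8 / \<eta>)"
  have "4 \<le> A" "8 / \<eta> \<le> A" by (simp_all add: A_def)
  then have "4 / A < \<eta>" using \<open>0 < \<eta>\<close> by (simp add: field_simps)
  then show ?thesis using that[OF \<open>4 \<le> A\<close>] \<eta> \<open>4 \<le> A\<close> by simp
qed

lemma smooth_term_le: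
  assumes L: "\<And>i. 0 < L$i" "\<And>i. L$i \<le> \<bar>p$i - q$i\<bar>" and r: "0 \<le> r" "r \<le> s" "s \<le> 1"
  shows "C * \<omega> r * SZv \<theta> p q \<le> C * \<omega> s / (L$1 * L$2 * L$3)"
proof -
  have "0 \<le> \<omega> r" "\<omega> r \<le> \<omega> s"
    using r \<omega>_nonneg by (auto intro!: mono_onD[OF \<omega>_mono])
  then have "C * \<omega> r * SZv \<theta> p q \<le> C * \<omega> s * (1 / (L$1 * L$2 * L$3))"
    using C_pos SZv_nonneg SZv_le_inverse_prod[OF less_imp_le[OF theta_pos] L]
    by (intro mult_mono) auto
  then show ?thesis by simp
qed

lemma dist_prod_le_of_kernel_ge:
  assumes "off_Delta x y" "0 < \<kappa>" "\<kappa> \<le> cmod (K x y)"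
  shows "\<bar>x$1 - y$1\<bar> * \<bar>x$2 - y$2\<bar> * \<bar>x$3 - y$3\<bar> \<le> C / \<kappa>"
proof -
  define t :: "real^3" where "t = (\<chi> i. \<bar>x$i - y$i\<bar>)"
  have t_pos: "0 < t$i" for i using assms(1) by (simp add: t_def off_Delta_def)
  have "\<kappa> \<le> C * SZv \<theta> x y" using size[OF assms(1)] assms(3) by linarith
  also have "\<dots> \<le> C * (1 / (t$1 * t$2 * t$3))"
    using SZv_le_inverse_prod[OF less_imp_le[OF theta_pos] t_pos, of x y] C_pos
    by (intro mult_left_mono) (auto simp: t_def)
  finally have "\<kappa> \<le> C / (t$1 * t$2 * t$3)" by simp
  moreover have "0 < t$1 * t$2 * t$3" using t_pos by simp
  ultimately show ?thesis using assms(2) by (simp add: t_def field_simps)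
qed

lemma kernel_diff_x1:
  assumes L: "\<And>i. 0 < L$i" "\<And>i. L$i \<le> \<bar>p$i - q$i\<bar>" and s: "0 \<le> s" "s \<le> 1"
    and d: "\<And>i. \<bar>p$i - p'$i\<bar> \<le> s / 2 * L$i" and "p'$2 = p$2" "p'$3 = p$3"
  shows "cmod (K p' q - K p q) \<le> C * \<omega> s / (L$1 * L$2 * L$3)"
proof -
  note half = abs_le_half_of_scaled[OF d L(1) L(2) s(2)]
  have "\<bar>p$1 - p'$1\<bar> / \<bar>p$1 - q$1\<bar> \<le> s" using half(2)[of 1] s by linarith
  then show ?thesis
    using smooth_x1[OF off_Delta_of_separated[OF L] _ assms(6,7)] half(1)
      smooth_term_le[OF L _ _ s(2)] by (meson divide_nonneg_nonneg abs_ge_zero order_trans)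
qed

lemma kernel_diff_x23:
  assumes L: "\<And>i. 0 < L$i" "\<And>i. L$i \<le> \<bar>p$i - q$i\<bar>" and s: "0 \<le> s" "s \<le> 1"
    and d: "\<And>i. \<bar>p$i - p'$i\<bar> \<le> s / 2 * L$i" and "p'$1 = p$1"
  shows "cmod (K p' q - K p q) \<le> C * \<omega> s / (L$1 * L$2 * L$3)"
proof -
  note half = abs_le_half_of_scaled[OF d L(1) L(2) s(2)]
  have "\<bar>p$2 - p'$2\<bar> / \<bar>p$2 - q$2\<bar> + \<bar>p$3 - p'$3\<bar> / \<bar>p$3 - q$3\<bar> \<le> s"
    using half(2)[of 2] half(2)[of 3] by linarith
  then show ?thesis
    using smooth_x23[OF off_Delta_of_separated[OF L] _ assms(6)] half(1)
      smooth_term_le[OF L _ _ s(2)] by (meson add_nonneg_nonneg divide_nonneg_nonneg abs_ge_zero order_trans)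
qed

lemma kernel_diff_y1:
  assumes L: "\<And>i. 0 < L$i" "\<And>i. L$i \<le> \<bar>p$i - q$i\<bar>" and s: "0 \<le> s" "s \<le> 1"
    and d: "\<And>i. \<bar>q$i - q'$i\<bar> \<le> s / 2 * L$i" and "q'$2 = q$2" "q'$3 = q$3"
  shows "cmod (K p q' - K p q) \<le> C * \<omega> s / (L$1 * L$2 * L$3)"
proof -
  note half = abs_le_half_of_scaled[OF d L(1) L(2) s(2)]
  have "\<bar>q$1 - q'$1\<bar> / \<bar>p$1 - q$1\<bar> \<le> s" using half(2)[of 1] s by linarith
  then show ?thesis
    using smooth_y1[OF off_Delta_of_separated[OF L] _ assms(6,7)] half(1)
      smooth_term_le[OF L _ _ s(2)] by (meson divide_nonneg_nonneg abs_ge_zero order_trans)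
qed

lemma kernel_diff_y23:
  assumes L: "\<And>i. 0 < L$i" "\<And>i. L$i \<le> \<bar>p$i - q$i\<bar>" and s: "0 \<le> s" "s \<le> 1"
    and d: "\<And>i. \<bar>q$i - q'$i\<bar> \<le> s / 2 * L$i" and "q'$1 = q$1"
  shows "cmod (K p q' - K p q) \<le> C * \<omega> s / (L$1 * L$2 * L$3)"
proof -
  note half = abs_le_half_of_scaled[OF d L(1) L(2) s(2)]
  have "\<bar>q$2 - q'$2\<bar> / \<bar>p$2 - q$2\<bar> + \<bar>q$3 - q'$3\<bar> / \<bar>p$3 - q$3\<bar> \<le> s"
    using half(2)[of 2] half(2)[of 3] by linarith
  then show ?thesis
    using smooth_y23[OF off_Delta_of_separated[OF L] _ assms(6)] half(1)
      smooth_term_le[OF L _ _ s(2)] by (meson add_nonneg_nonneg divide_nonneg_nonneg abs_ge_zero order_trans)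
qed

lemma kernel_diff_le_on_separated_boxes:
  assumes L: "\<And>i. 0 < L$i"
    and sep: "\<And>p q i. p \<in> cbox a b \<Longrightarrow> q \<in> cbox a' b' \<Longrightarrow> L$i \<le> \<bar>p$i - q$i\<bar>"
    and x: "x \<in> cbox a b" "x' \<in> cbox a b" and y: "y \<in> cbox a' b'" "y' \<in> cbox a' b'"
    and s: "0 \<le> s" "s \<le> 1"
    and dx: "\<And>i. \<bar>x$i - x'$i\<bar> \<le> s / 2 * L$i" and dy: "\<And>i. \<bar>y$i - y'$i\<bar> \<le> s / 2 * L$i"
  shows "cmod (K x' y' - K x y) \<le> 4 * C * \<omega> s / (L$1 * L$2 * L$3)"
proof -
  \<comment> \<open>Move x1, then (x2, x3), then y1, then (y2, y3); the intermediate points p, q stay in the boxes.\<close>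
  define LL where "LL = L$1 * L$2 * L$3"
  define p :: "real^3" where "p = (\<chi> i. if i = 1 then x'$i else x$i)"
  define q :: "real^3" where "q = (\<chi> i. if i = 1 then y'$i else y$i)"
  have p: "p \<in> cbox a b" using x by (auto simp: p_def mem_box_cart)
  have q: "q \<in> cbox a' b'" using y by (auto simp: q_def mem_box_cart)
  have d0: "0 \<le> s / 2 * L$i" for i using s L[of i] by simp
  have step1: "cmod (K p y - K x y) \<le> C * \<omega> s / LL"
    unfolding LL_def using dx d0 by (intro kernel_diff_x1[OF L sep[OF x(1) y(1)] s]) (auto simp: p_def)
  have step2: "cmod (K x' y - K p y) \<le> C * \<omega> s / LL"
    unfolding LL_def using dx d0
    by (intro kernel_diff_x23[OF L sep[OF p y(1)] s]) (auto simp: p_def abs_minus_commute)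
  have step3: "cmod (K x' q - K x' y) \<le> C * \<omega> s / LL"
    unfolding LL_def using dy d0 by (intro kernel_diff_y1[OF L sep[OF x(2) y(1)] s]) (auto simp: q_def)
  have step4: "cmod (K x' y' - K x' q) \<le> C * \<omega> s / LL"
    unfolding LL_def using dy d0
    by (intro kernel_diff_y23[OF L sep[OF x(2) q] s]) (auto simp: q_def abs_minus_commute)
  have "cmod (K x' y' - K x y) \<le> C * \<omega> s / LL + (C * \<omega> s / LL + (C * \<omega> s / LL + C * \<omega> s / LL))"
    by (intro norm_diff_triangle_le[OF step4] norm_diff_triangle_le[OF step3]
        norm_diff_triangle_le[OF step2] step1)
  then show ?thesis unfolding LL_def by simp
qed

lemma kernel_continuous_on_separated_boxes:
  assumes L: "\<And>i. 0 < L$i"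
    and sep: "\<And>p q i. p \<in> cbox a b \<Longrightarrow> q \<in> cbox a' b' \<Longrightarrow> L$i \<le> \<bar>p$i - q$i\<bar>"
  shows "continuous_on (cbox a b \<times> cbox a' b') (\<lambda>z. K (fst z) (snd z))"
  unfolding continuous_on_iff
proof (intro ballI allI impI)
  fix z :: "(real^3) \<times> (real^3)" and e :: real
  assume z: "z \<in> cbox a b \<times> cbox a' b'" and "0 < e"
  define LL where "LL = L$1 * L$2 * L$3"
  have "0 < LL" using L by (simp add: LL_def)
  then obtain \<eta> where \<eta>: "0 < \<eta>" "\<And>s. 0 < s \<Longrightarrow> s < \<eta> \<Longrightarrow> \<omega> s < e * LL / (8 * C)"
    using \<omega>_eventually_less[of "e * LL / (8 * C)"] \<open>0 < e\<close> C_pos by auto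
  define s where "s = min (\<eta> / 2) 1"
  have s: "0 < s" "s \<le> 1" "s < \<eta>" using \<eta>(1) by (auto simp: s_def)
  define Lmin where "Lmin = min (L$1) (min (L$2) (L$3))"
  have "0 < Lmin" using L by (simp add: Lmin_def)
  have Lmin_le: "Lmin \<le> L$i" for i using exhaust_3[of i] by (auto simp: Lmin_def)
  show "\<exists>d>0. \<forall>z'\<in>cbox a b \<times> cbox a' b'. dist z' z < d \<longrightarrow>
      dist (K (fst z') (snd z')) (K (fst z) (snd z)) < e"
  proof (intro exI[of _ "s / 2 * Lmin"] conjI ballI impI)
    show "0 < s / 2 * Lmin" using s \<open>0 < Lmin\<close> by simp
    fix z' assume z': "z' \<in> cbox a b \<times> cbox a' b'" and "dist z' z < s / 2 * Lmin"
    have "s / 2 * Lmin \<le> s / 2 * L$i" for i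
      using Lmin_le[of i] s by (intro mult_left_mono) auto
    then have close: "dist z z' \<le> s / 2 * L$i" for i
      using \<open>dist z' z < s / 2 * Lmin\<close> dist_commute[of z z'] by (smt (verit))
    have "\<bar>fst z$i - fst z'$i\<bar> \<le> s / 2 * L$i" "\<bar>snd z$i - snd z'$i\<bar> \<le> s / 2 * L$i" for i
      using abs_component_diff_le_dist[of "fst z" i "fst z'"] abs_component_diff_le_dist[of "snd z" i "snd z'"]
        dist_fst_le[of z z'] dist_snd_le[of z z'] close[of i] by linarith+
    then have "cmod (K (fst z') (snd z') - K (fst z) (snd z)) \<le> 4 * C * \<omega> s / LL"
      unfolding LL_def using z z' s
      by (intro kernel_diff_le_on_separated_boxes[where L = L and a = a and b = b and a' = a' and b' = b'])
        (auto intro: L sep)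
    also have "\<dots> \<le> 4 * C * (e * LL / (8 * C)) / LL"
      using \<eta>(2)[OF s(1,3)] C_pos \<open>0 < LL\<close> by (intro divide_right_mono mult_left_mono) auto
    also have "\<dots> < e" using C_pos \<open>0 < LL\<close> \<open>0 < e\<close> by simp
    finally show "dist (K (fst z') (snd z')) (K (fst z) (snd z)) < e" by (simp add: dist_norm)
  qed
qed

end

section \<open>Zygmund rectangles and their translates\<close>

lemma zyg_rect_translate:
  assumes "\<And>i. 0 < l$i" "l$3 = l$1 * l$2"
  shows "zyg_rect (cbox a (a + l))"
  unfolding zyg_rect_def using assms by (intro exI[of _ a] exI[of _ "a + l"] conjI allI) simp_all

lemma zyg_rectE:
  assumes "zyg_rect R"
  obtains a l where "R = cbox a (a + l)" "\<And>i. 0 < l$i" "l$3 = l$1 * l$2"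
proof -
  obtain a b where "R = cbox a b" "\<forall>i. a$i < b$i" "b$3 - a$3 = (b$1 - a$1) * (b$2 - a$2)"
    using assms unfolding zyg_rect_def by blast
  then show ?thesis by (intro that[of a "b - a"]) simp_all
qed

lemma prod_UNIV_3: "prod f (UNIV::3 set) = f 1 * f 2 * f 3"
  unfolding UNIV_3 by (simp add: mult.assoc)

lemma measure_cbox_translate:
  fixes a l :: "real^3"
  assumes "\<And>i. 0 \<le> l$i"
  shows "measure lborel (cbox a (a + l)) = l$1 * l$2 * l$3"
proof -
  have "a \<in> cbox a (a + l)" using assms by (simp add: mem_box_cart)
  then have "cbox a (a + l) \<noteq> {}" by blast
  then show ?thesis using content_cbox_cart[of a "a + l"] prod_UNIV_3 by simp
qed

lemma zyg_rect_compact: "zyg_rect R \<Longrightarrow> compact R"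
  unfolding zyg_rect_def by (metis compact_cbox)

lemma zyg_rect_measure_pos: "zyg_rect R \<Longrightarrow> 0 < measure lborel R"
  by (elim zyg_rectE) (simp add: measure_cbox_translate less_imp_le)

lemma setdist_translated_intervals:
  fixes a x l :: real
  assumes "0 \<le> l" "l \<le> \<bar>x - a\<bar>"
  shows "setdist {a..a + l} {x..x + l} = \<bar>x - a\<bar> - l"
proof (cases "a \<le> x")
  case True
  have "setdist {a..a + l} {x..x + l} = dist (a + l) x"
    by (rule setdist_unique) (use assms True in \<open>auto simp: dist_real_def\<close>)
  then show ?thesis using assms True by (simp add: dist_real_def)
next
  case False
  have "setdist {a..a + l} {x..x + l} = dist a (x + l)"
    by (rule setdist_unique) (use assms False in \<open>auto simp: dist_real_def\<close>)
  then show ?thesis using assms False by (simp add: dist_real_def)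
qed

lemma adm_pair_translate:
  assumes l: "\<And>i. 0 < l$i" "l$3 = l$1 * l$2" and "1 \<le> C0"
    and t: "\<And>i. 2 * l$i \<le> \<bar>x$i - a$i\<bar>" "\<And>i. \<bar>x$i - a$i\<bar> \<le> C0 * l$i"
  shows "adm_pair C0 (cbox a (a + l)) (cbox x (x + l))"
  unfolding adm_pair_def
proof (intro conjI zyg_rect_translate[OF l] exI allI)
  fix i
  have sd: "setdist {a$i..(a + l)$i} {x$i..(x + l)$i} = \<bar>x$i - a$i\<bar> - l$i"
    using setdist_translated_intervals[of "l$i" "x$i" "a$i"] l(1)[of i] t(1)[of i] by simp
  have "l$i / C0 \<le> l$i" using \<open>1 \<le> C0\<close> l(1)[of i] by (simp add: divide_le_eq)
  then show "((a + l)$i - a$i) / C0 \<le> setdist {a$i..(a + l)$i} {x$i..(x + l)$i}"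
    unfolding sd using t(1)[of i] by simp
  show "setdist {a$i..(a + l)$i} {x$i..(x + l)$i} \<le> C0 * ((a + l)$i - a$i)"
    unfolding sd using t(2)[of i] l(1)[of i] by simp
qed auto

lemma abs_diff_ge_of_translated_boxes:
  fixes p q x a l :: "real^'n"
  assumes "p \<in> cbox x (x + l)" "q \<in> cbox a (a + l)"
  shows "\<bar>x$i - a$i\<bar> - l$i \<le> \<bar>p$i - q$i\<bar>"
proof -
  have "x$i \<le> p$i" "p$i \<le> x$i + l$i" "a$i \<le> q$i" "q$i \<le> a$i + l$i"
    using assms by (auto simp: mem_box_cart)
  then show ?thesis by arith
qed

lemma le_of_prod_le:
  fixes t1 t2 t3 a1 a2 a3 M :: real
  assumes "t1 * t2 * t3 \<le> M * (a1 * a2 * a3)" "0 < t1" "0 < a2" "a2 < t2" "0 < a3" "a3 < t3"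
  shows "t1 \<le> M * a1"
proof (rule ccontr)
  assume "\<not> t1 \<le> M * a1"
  then have "M * a1 * (a2 * a3) < t1 * (a2 * a3)" using assms by (intro mult_strict_right_mono) auto
  also have "\<dots> \<le> t1 * (t2 * t3)" using assms by (intro mult_left_mono mult_mono) auto
  finally show False using assms(1) by (simp add: mult.assoc)
qed

text \<open>Dilating the sides of a Zygmund rectangle by these factors gives a Zygmund rectangle.\<close>
definition zygmund_scale :: "real \<Rightarrow> real^3" where
  "zygmund_scale A = vector [A, A, A^2]"

lemma zygmund_scale_bounds:
  assumes "1 \<le> A"
  shows "A \<le> zygmund_scale A $ i" "zygmund_scale A $ i \<le> A^2"
proof -
  have "A \<le> A^2" using assms by (simp add: power2_eq_square)
  then show "A \<le> zygmund_scale A $ i" "zygmund_scale A $ i \<le> A^2"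
    using exhaust_3[of i] by (auto simp: zygmund_scale_def)
qed

lemma one_le_max_mult_square:
  fixes M A :: real
  assumes "1 \<le> A"
  shows "1 \<le> max 1 M * A^2"
  using mult_mono[of 1 "max 1 M" 1 "A^2"] one_le_power[OF assms, of 2] by simp

lemma translate_scales:
  fixes l t \<alpha> A M :: real
  assumes l: "0 < l" and A: "4 \<le> A" "A \<le> \<alpha>" "\<alpha> \<le> A^2" and t: "\<alpha> * l < t" "t \<le> M * (\<alpha> * l)"
    and "0 \<le> M"
  shows "0 < \<alpha> * l / 2" "\<alpha> * l / 2 \<le> t - l" "2 * l \<le> t" "l \<le> (4 / A) / 2 * (\<alpha> * l / 2)"
    "t \<le> max 1 M * A^2 * l"
proof -
  have "A * l \<le> \<alpha> * l" "4 * l \<le> A * l" using l A by (simp_all add: mult_right_mono)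
  then show "0 < \<alpha> * l / 2" "\<alpha> * l / 2 \<le> t - l" "2 * l \<le> t" using l t(1) by linarith+
  have "(4 / A) / 2 * (\<alpha> * l / 2) = \<alpha> * l / A" using A(1) by simp
  then show "l \<le> (4 / A) / 2 * (\<alpha> * l / 2)"
    using \<open>A * l \<le> \<alpha> * l\<close> A(1) by (simp add: pos_le_divide_eq mult.commute)
  have "M * (\<alpha> * l) \<le> max 1 M * (A^2 * l)"
    using l A \<open>0 \<le> M\<close> by (intro mult_mono mult_right_mono) auto
  then show "t \<le> max 1 M * A^2 * l" using t(2) by (simp add: mult.assoc)
qed

section \<open>A far rectangle on which the kernel is nearly constant\<close>

locale nondegenerate_zygmund_kernel = zygmund_kernel_bounds +
  fixes c :: real
  assumes c_pos: "0 < c"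
    and nondegenerate: "\<And>y \<delta>1 \<delta>2. 0 < \<delta>1 \<Longrightarrow> 0 < \<delta>2 \<Longrightarrow> \<exists>x. \<delta>1 < \<bar>x$1 - y$1\<bar> \<and>
          \<delta>2 < \<bar>x$2 - y$2\<bar> \<and> \<delta>1 * \<delta>2 < \<bar>x$3 - y$3\<bar> \<and> c * \<delta>1 powr -2 * \<delta>2 powr -2 \<le> cmod (K x y)"

lemma nondegenerate_zygmund_kernelE:
  assumes "zygmund_kernel_bounds \<theta> K C \<omega>" "non_degenerate K"
  obtains c where "nondegenerate_zygmund_kernel \<theta> K C \<omega> c"
  using assms unfolding non_degenerate_def nondegenerate_zygmund_kernel_def
    nondegenerate_zygmund_kernel_axioms_def by blast

context nondegenerate_zygmund_kernel
begin

lemma far_point_with_large_kernel: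
  fixes l :: "real^3"
  assumes l: "\<And>i. 0 < l$i" "l$3 = l$1 * l$2" and "0 < A"
  obtains x where "\<And>i. zygmund_scale A $ i * l$i < \<bar>x$i - y$i\<bar>"
    "\<And>i. \<bar>x$i - y$i\<bar> \<le> C / c * (zygmund_scale A $ i * l$i)"
    "c / (A^4 * (l$1 * l$2 * l$3)) \<le> cmod (K x y)"
proof -
  have Al: "0 < A * l$1" "0 < A * l$2" "0 < A^2 * l$3" using l \<open>0 < A\<close> by simp_all
  have A2l3: "A^2 * l$3 = A * l$1 * (A * l$2)" using l(2) by (simp add: power2_eq_square)
  obtain x where t1: "A * l$1 < \<bar>x$1 - y$1\<bar>" and t2: "A * l$2 < \<bar>x$2 - y$2\<bar>"
    and t3: "A^2 * l$3 < \<bar>x$3 - y$3\<bar>"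
    and large: "c * (A * l$1) powr -2 * (A * l$2) powr -2 \<le> cmod (K x y)"
    using nondegenerate[OF Al(1,2)] unfolding A2l3 by blast
  define V where "V = (A * l$1) * (A * l$2) * (A^2 * l$3)"
  have V: "A^4 * (l$1 * l$2 * l$3) = V" "V = (A * l$1)^2 * (A * l$2)^2"
    unfolding V_def A2l3 using l(2) by (simp_all add: power2_eq_square power4_eq_xxxx)
  have lower: "c / V \<le> cmod (K x y)"
    using large Al by (simp add: V(2) powr_minus_divide powr_numeral divide_divide_eq_left)
  have "0 < V" using Al by (simp add: V_def)
  have "off_Delta x y"
    using t1 t2 t3 Al unfolding off_Delta_def forall_3 by auto
  then have prod: "\<bar>x$1 - y$1\<bar> * \<bar>x$2 - y$2\<bar> * \<bar>x$3 - y$3\<bar> \<le> C / c * V"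
    using dist_prod_le_of_kernel_ge[OF _ _ lower] \<open>0 < V\<close> c_pos by simp
  have "\<bar>x$1 - y$1\<bar> \<le> C / c * (A * l$1)"
    by (rule le_of_prod_le[OF prod[unfolded V_def]]) (use Al t1 t2 t3 in auto)
  moreover have "\<bar>x$2 - y$2\<bar> \<le> C / c * (A * l$2)"
    by (rule le_of_prod_le[of _ "\<bar>x$1 - y$1\<bar>" "\<bar>x$3 - y$3\<bar>" _ _ "A * l$1" "A^2 * l$3"])
      (use prod Al t1 t2 t3 in \<open>auto simp: V_def ac_simps\<close>)
  moreover have "\<bar>x$3 - y$3\<bar> \<le> C / c * (A^2 * l$3)"
    by (rule le_of_prod_le[of _ "\<bar>x$1 - y$1\<bar>" "\<bar>x$2 - y$2\<bar>" _ _ "A * l$1" "A * l$2"])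
      (use prod Al t1 t2 t3 in \<open>auto simp: V_def ac_simps\<close>)
  ultimately have "zygmund_scale A $ i * l$i < \<bar>x$i - y$i\<bar>"
      "\<bar>x$i - y$i\<bar> \<le> C / c * (zygmund_scale A $ i * l$i)" for i
    using t1 t2 t3 exhaust_3[of i] by (auto simp: zygmund_scale_def)
  then show ?thesis by (rule that[OF _ _ lower[folded V(1)]])
qed

lemma far_translate_box:
  assumes A: "4 \<le> A" and R: "zyg_rect R"
  obtains a l x0 L where "R = cbox a (a + l)" "\<And>i. 0 < l$i"
    "adm_pair (max 1 (C / c) * A^2) R (cbox x0 (x0 + l))"
    "measure lborel (cbox x0 (x0 + l)) = measure lborel R"
    "\<And>i. 0 < L$i" "\<And>p q i. p \<in> cbox x0 (x0 + l) \<Longrightarrow> q \<in> R \<Longrightarrow> L$i \<le> \<bar>p$i - q$i\<bar>"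
    "\<And>i. l$i \<le> (4 / A) / 2 * L$i" "L$1 * L$2 * L$3 = A^4 * measure lborel R / 8"
    "c / (A^4 * measure lborel R) \<le> cmod (K x0 a)"
proof -
  obtain a l where R_eq: "R = cbox a (a + l)" and l: "\<And>i. 0 < l$i" "l$3 = l$1 * l$2"
    using zyg_rectE[OF R] by blast
  have "0 < A" using A(1) by simp
  define \<alpha> where "\<alpha> = zygmund_scale A"
  obtain x0 where t_lower: "\<And>i. \<alpha>$i * l$i < \<bar>x0$i - a$i\<bar>"
    and t_upper: "\<And>i. \<bar>x0$i - a$i\<bar> \<le> C / c * (\<alpha>$i * l$i)"
    and large: "c / (A^4 * (l$1 * l$2 * l$3)) \<le> cmod (K x0 a)"
    using far_point_with_large_kernel[OF l \<open>0 < A\<close>, where y = a] unfolding \<alpha>_def by blast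
  have \<alpha>: "A \<le> \<alpha>$i" "\<alpha>$i \<le> A^2" for i
    using zygmund_scale_bounds A(1) by (simp_all add: \<alpha>_def)
  define C0 where "C0 = max 1 (C / c) * A^2"
  define L :: "real^3" where "L = (\<chi> i. \<alpha>$i * l$i / 2)"
  have "0 \<le> C / c" using C_pos c_pos by simp
  have coord: "0 < L$i" "L$i \<le> \<bar>x0$i - a$i\<bar> - l$i" "2 * l$i \<le> \<bar>x0$i - a$i\<bar>"
      "l$i \<le> (4 / A) / 2 * L$i" "\<bar>x0$i - a$i\<bar> \<le> C0 * l$i" for i
    using translate_scales[OF l(1) A(1) \<alpha> t_lower t_upper \<open>0 \<le> C / c\<close>]
    by (simp_all add: L_def C0_def)
  have sep: "L$i \<le> \<bar>p$i - q$i\<bar>" if "p \<in> cbox x0 (x0 + l)" "q \<in> R" for p q i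
    using abs_diff_ge_of_translated_boxes[OF that[unfolded R_eq], of i] coord(2)[of i] by linarith
  have "1 \<le> C0" unfolding C0_def using A(1) by (intro one_le_max_mult_square) simp
  have adm: "adm_pair C0 R (cbox x0 (x0 + l))"
    unfolding R_eq by (rule adm_pair_translate[OF l \<open>1 \<le> C0\<close> coord(3,5)])
  have measR: "measure lborel R = l$1 * l$2 * l$3"
    unfolding R_eq using l(1) by (simp add: measure_cbox_translate less_imp_le)
  have "measure lborel (cbox x0 (x0 + l)) = measure lborel R"
    unfolding measR using l(1) by (simp add: measure_cbox_translate less_imp_le)
  moreover have "L$1 * L$2 * L$3 = A^4 * measure lborel R / 8"
    unfolding measR by (simp add: L_def \<alpha>_def zygmund_scale_def power4_eq_xxxx power2_eq_square)
  ultimately show ?thesis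
    using that[OF R_eq l(1) adm[unfolded C0_def] _ coord(1) sep coord(4)] large measR by simp
qed

lemma kernel_nearly_constant_on_far_box:
  assumes A: "4 \<le> A" "\<omega> (4 / A) < c / (64 * C)" and R: "zyg_rect R"
  obtains P K0 where "adm_pair (max 1 (C / c) * A^2) R P" "compact P"
    "measure lborel P = measure lborel R"
    "continuous_on (P \<times> R) (\<lambda>z. K (fst z) (snd z))"
    "\<And>x y. x \<in> P \<Longrightarrow> y \<in> R \<Longrightarrow> cmod (K x y - K0) \<le> cmod K0 / 2"
    "c / (A^4 * measure lborel R) \<le> cmod K0"
proof -
  obtain a l x0 L where R_eq: "R = cbox a (a + l)" and l: "\<And>i. 0 < l$i"
    and adm: "adm_pair (max 1 (C / c) * A^2) R (cbox x0 (x0 + l))"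
    and measP: "measure lborel (cbox x0 (x0 + l)) = measure lborel R"
    and L: "\<And>i. 0 < L$i" and sep: "\<And>p q i. p \<in> cbox x0 (x0 + l) \<Longrightarrow> q \<in> R \<Longrightarrow> L$i \<le> \<bar>p$i - q$i\<bar>"
    and l_le: "\<And>i. l$i \<le> (4 / A) / 2 * L$i" and LL: "L$1 * L$2 * L$3 = A^4 * measure lborel R / 8"
    and large: "c / (A^4 * measure lborel R) \<le> cmod (K x0 a)"
    using far_translate_box[OF A(1) R] by blast
  have "0 < measure lborel R" using R by (rule zyg_rect_measure_pos)
  have cont: "continuous_on (cbox x0 (x0 + l) \<times> R) (\<lambda>z. K (fst z) (snd z))"
    unfolding R_eq by (rule kernel_continuous_on_separated_boxes[OF L sep[unfolded R_eq]])
  have close: "cmod (K x y - K x0 a) \<le> cmod (K x0 a) / 2" if "x \<in> cbox x0 (x0 + l)" "y \<in> R" for x y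
  proof -
    have x0: "x0 \<in> cbox x0 (x0 + l)" and a: "a \<in> R"
      using l by (simp_all add: R_eq mem_box_cart less_imp_le)
    have "\<bar>x0$i - x$i\<bar> \<le> l$i" "\<bar>a$i - y$i\<bar> \<le> l$i" for i
      using that unfolding R_eq mem_box_cart by (smt (verit) vector_add_component)+
    then have "\<bar>x0$i - x$i\<bar> \<le> (4 / A) / 2 * L$i" "\<bar>a$i - y$i\<bar> \<le> (4 / A) / 2 * L$i" for i
      using l_le[of i] by (meson order_trans)+
    then have "cmod (K x y - K x0 a) \<le> 4 * C * \<omega> (4 / A) / (L$1 * L$2 * L$3)"
      using A(1) by (intro kernel_diff_le_on_separated_boxes[OF L sep[unfolded R_eq]])
        (use x0 a that in \<open>auto simp: R_eq\<close>)
    also have "\<dots> = 32 * (C * \<omega> (4 / A)) / (A^4 * measure lborel R)" unfolding LL by simp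
    also have "\<dots> \<le> 32 * (C * (c / (64 * C))) / (A^4 * measure lborel R)"
      using A C_pos \<open>0 < measure lborel R\<close> by (intro divide_right_mono mult_left_mono) auto
    also have "\<dots> = c / (A^4 * measure lborel R) / 2" using C_pos by simp
    also have "\<dots> \<le> cmod (K x0 a) / 2" using large by simp
    finally show ?thesis .
  qed
  show ?thesis by (rule that[OF adm compact_cbox measP cont close large])
qed

end

section \<open>Testing the commutator form\<close>

lemma locally_integrable_borel_measurable:
  assumes "locally_integrable b"
  shows "b \<in> borel_measurable lborel"
proof (rule borel_measurable_LIMSEQ_real)
  fix n :: nat
  have "set_integrable lborel (cball 0 (real n)) b"
    using assms unfolding locally_integrable_def by simp
  then show "(\<lambda>x. indicator (cball 0 (real n)) x * b x) \<in> borel_measurable lborel"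
    unfolding set_integrable_def by (simp add: borel_measurable_integrable)
next
  fix x :: "real^3"
  have "eventually (\<lambda>n. indicator (cball 0 (real n)) x * b x = b x) sequentially"
  proof (rule eventually_sequentiallyI)
    fix n assume "nat \<lceil>norm x\<rceil> \<le> n"
    then have "norm x \<le> real n" by linarith
    then show "indicator (cball 0 (real n)) x * b x = b x" by simp
  qed
  then show "(\<lambda>n. indicator (cball 0 (real n)) x * b x) \<longlonglongrightarrow> b x"
    by (rule tendsto_eventually)
qed

lemma set_integral_abs_diff_avg:
  fixes b :: "real^3 \<Rightarrow> real"
  assumes b: "set_integrable lborel R b" and R: "R \<in> sets lborel" "emeasure lborel R < \<infinity>"
    "0 < measure lborel R" and \<sigma>: "\<sigma> = 1 \<or> \<sigma> = -1"
  shows "set_lebesgue_integral lborel R (\<lambda>x. \<bar>b x - avg b R\<bar>)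
         = 2 * (\<integral>y. indicator R y * max 0 (\<sigma> * (b y - avg b R)) \<partial>lborel)"
proof -
  define f where "f y = indicator R y * (b y - avg b R)" for y
  have f: "integrable lborel f"
    using b R unfolding f_def set_integrable_def by (simp add: right_diff_distrib)
  have "integral\<^sup>L lborel f = set_lebesgue_integral lborel R b - avg b R * measure lborel R"
    using b R unfolding f_def set_integrable_def set_lebesgue_integral_def
    by (simp add: right_diff_distrib Bochner_Integration.integral_diff)
  then have f0: "integral\<^sup>L lborel f = 0" using R(3) by (simp add: avg_def)
  \<comment> \<open>For \<sigma> = \<plusminus>1, |v| = 2 max 0 (\<sigma> v) - \<sigma> v.\<close>
  have pos: "indicator R y * max 0 (\<sigma> * (b y - avg b R)) = (\<bar>f y\<bar> + \<sigma> * f y) / 2" for y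
    using \<sigma> by (cases "y \<in> R") (auto simp: f_def split: split_max)
  have abs: "indicator R y *\<^sub>R \<bar>b y - avg b R\<bar> = \<bar>f y\<bar>" for y
    by (simp add: f_def indicator_def)
  show ?thesis
    unfolding set_lebesgue_integral_def abs pos using f f0 by simp
qed

lemma integrable_indicator_pos_part:
  fixes b :: "'a \<Rightarrow> real"
  assumes "set_integrable M R b" "R \<in> sets M" "emeasure M R < \<infinity>"
  shows "integrable M (\<lambda>y. indicator R y * max 0 (\<sigma> * (b y - \<beta>)))"
proof -
  have "(\<lambda>y. indicator R y * max 0 (\<sigma> * (b y - \<beta>)))
      = (\<lambda>y. max 0 (\<sigma> * (indicator R y * b y - \<beta> * indicator R y)))"
    by (auto simp: fun_eq_iff indicator_def)
  then show ?thesis using assms unfolding set_integrable_def by simp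
qed

lemma exists_sign_half_measure:
  assumes P: "P \<in> sets M" "emeasure M P < \<infinity>" and f: "f \<in> borel_measurable M"
  obtains \<sigma> :: real where "\<sigma> = 1 \<or> \<sigma> = -1" "measure M P / 2 \<le> measure M {x \<in> P. \<sigma> * f x \<le> 0}"
proof -
  define F where "F \<sigma> = {x \<in> P. \<sigma> * f x \<le> 0}" for \<sigma> :: real
  have F: "F \<sigma> \<in> sets M" "emeasure M (F \<sigma>) \<noteq> \<infinity>" for \<sigma>
    using P f emeasure_mono[of "F \<sigma>" P M] by (auto simp: F_def)
  have "P = F 1 \<union> F (-1)" by (auto simp: F_def)
  then have "measure M P \<le> measure M (F 1) + measure M (F (-1))"
    using measure_subadditive[OF F(1) F(1) F(2) F(2)] by simp
  then show ?thesis
  proof (cases "measure M P / 2 \<le> measure M (F 1)")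
    case False
    then have "measure M P / 2 \<le> measure M (F (-1))"
      using \<open>measure M P \<le> _\<close> by linarith
    then show ?thesis using that[of "-1"] by (simp add: F_def)
  qed (use that[of 1] F_def in simp)
qed

lemma integrable_iterated_of_bound:
  fixes H :: "'a \<Rightarrow> 'b \<Rightarrow> 'c::{banach, second_countable_topology}"
  assumes N: "sigma_finite_measure N"
    and H: "(\<lambda>(x, y). H x y) \<in> borel_measurable (M \<Otimes>\<^sub>M N)"
    and f: "integrable M f1" "integrable M f2" and g: "integrable N g1" "integrable N g2"
    and bound: "\<And>x y. norm (H x y) \<le> f1 x * g1 y + f2 x * g2 y"
  shows "x \<in> space M \<Longrightarrow> integrable N (H x)" "integrable M (\<lambda>x. \<integral>y. H x y \<partial>N)"
proof -
  have meas: "H x \<in> borel_measurable N" if "x \<in> space M" for x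
    using measurable_Pair2[OF H that] by simp
  show int: "integrable N (H x)" if "x \<in> space M" for x
  proof (rule Bochner_Integration.integrable_bound)
    show "integrable N (\<lambda>y. f1 x * g1 y + f2 x * g2 y)"
      using g by (intro Bochner_Integration.integrable_add integrable_mult_right)
    show "AE y in N. norm (H x y) \<le> norm (f1 x * g1 y + f2 x * g2 y)"
      by (intro AE_I2 order_trans[OF bound]) simp
  qed (rule meas[OF that])
  show "integrable M (\<lambda>x. \<integral>y. H x y \<partial>N)"
  proof (rule Bochner_Integration.integrable_bound)
    show "integrable M (\<lambda>x. f1 x * integral\<^sup>L N g1 + f2 x * integral\<^sup>L N g2)"
      using f by (intro Bochner_Integration.integrable_add integrable_mult_left)
    show "(\<lambda>x. \<integral>y. H x y \<partial>N) \<in> borel_measurable M"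
      using sigma_finite_measure.borel_measurable_lebesgue_integral[OF N H] by simp
    show "AE x in M. norm (\<integral>y. H x y \<partial>N) \<le> norm (f1 x * integral\<^sup>L N g1 + f2 x * integral\<^sup>L N g2)"
    proof (intro AE_I2)
      fix x assume "x \<in> space M"
      have "norm (\<integral>y. H x y \<partial>N) \<le> (\<integral>y. norm (H x y) \<partial>N)" by (rule integral_norm_bound)
      also have "\<dots> \<le> (\<integral>y. f1 x * g1 y + f2 x * g2 y \<partial>N)"
        using int[OF \<open>x \<in> space M\<close>] g bound
        by (intro integral_mono Bochner_Integration.integrable_add integrable_mult_right integrable_norm)
      also have "\<dots> = f1 x * integral\<^sup>L N g1 + f2 x * integral\<^sup>L N g2"
        using g by (simp add: Bochner_Integration.integral_add)
      finally show "norm (\<integral>y. H x y \<partial>N) \<le> norm (f1 x * integral\<^sup>L N g1 + f2 x * integral\<^sup>L N g2)"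
        by simp
    qed
  qed
qed

lemma integral_mult_le_Re_iterated:
  fixes H :: "'a \<Rightarrow> 'b \<Rightarrow> complex" and f :: "'a \<Rightarrow> real" and g :: "'b \<Rightarrow> real"
  assumes H: "\<And>x. x \<in> space M \<Longrightarrow> integrable N (H x)" "integrable M (\<lambda>x. \<integral>y. H x y \<partial>N)"
    and f: "integrable M f" and g: "integrable N g"
    and le: "\<And>x y. f x * g y \<le> Re (H x y)"
  shows "(\<integral>x. f x \<partial>M) * (\<integral>y. g y \<partial>N) \<le> Re (\<integral>x. (\<integral>y. H x y \<partial>N) \<partial>M)"
proof -
  have "(\<integral>x. f x \<partial>M) * (\<integral>y. g y \<partial>N) = (\<integral>x. (\<integral>y. f x * g y \<partial>N) \<partial>M)"
    by simp
  also have "\<dots> \<le> (\<integral>x. Re (\<integral>y. H x y \<partial>N) \<partial>M)"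
  proof (rule integral_mono)
    show "integrable M (\<lambda>x. \<integral>y. f x * g y \<partial>N)" using f by simp
    show "integrable M (\<lambda>x. Re (\<integral>y. H x y \<partial>N))" using integrable_Re[OF H(2)] .
    show "(\<integral>y. f x * g y \<partial>N) \<le> Re (\<integral>y. H x y \<partial>N)" if "x \<in> space M" for x
      unfolding integral_Re[OF H(1)[OF that], symmetric]
      using g H(1)[OF that] le by (intro integral_mono) auto
  qed
  also have "\<dots> = Re (\<integral>x. (\<integral>y. H x y \<partial>N) \<partial>M)"
    using integral_Re[OF H(2)] .
  finally show ?thesis .
qed

lemma Re_cnj_mult_ge:
  fixes z w :: complex
  assumes "cmod (z - w) \<le> cmod w / 2"
  shows "cmod w ^ 2 / 2 \<le> Re (cnj w * z)"
proof -
  have "\<bar>Re (cnj w * (z - w))\<bar> \<le> cmod w * cmod (z - w)"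
    using abs_Re_le_cmod[of "cnj w * (z - w)"] by (simp add: norm_mult)
  also have "\<dots> \<le> cmod w * (cmod w / 2)" using assms by (intro mult_left_mono) auto
  finally have "\<bar>Re (cnj w * (z - w))\<bar> \<le> cmod w ^ 2 / 2" by (simp add: power2_eq_square)
  moreover have "cnj w * z = cnj w * w + cnj w * (z - w)" by (simp add: algebra_simps)
  then have "Re (cnj w * z) = Re (cnj w * w) + Re (cnj w * (z - w))"
    by (metis plus_complex.sel(1))
  moreover have "Re (cnj w * w) = cmod w ^ 2"
    using cmod_power2[of w] by (simp add: power2_eq_square)
  ultimately show ?thesis by linarith
qed

lemma Re_rotated_kernel_ge:
  fixes z K0 :: complex and \<sigma> bx "by" \<beta> :: real
  assumes close: "cmod (z - K0) \<le> cmod K0 / 2" and "K0 \<noteq> 0"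
    and x: "\<sigma> * (bx - \<beta>) \<le> 0" and y: "0 \<le> \<sigma> * (by - \<beta>)"
  shows "cmod K0 / 2 * (\<sigma> * (by - \<beta>))
    \<le> Re (complex_of_real (- \<sigma> / cmod K0) * cnj K0 * (complex_of_real (bx - by) * z))"
proof -
  define m where "m = cmod K0"
  have "0 < m" using \<open>K0 \<noteq> 0\<close> by (simp add: m_def)
  have Re_eq: "Re (complex_of_real (- \<sigma> / m) * cnj K0 * (complex_of_real (bx - by) * z))
      = \<sigma> * (by - bx) / m * Re (cnj K0 * z)"
  proof -
    have "complex_of_real (- \<sigma> / m) * cnj K0 * (complex_of_real (bx - by) * z)
        = (- \<sigma> / m * (bx - by)) *\<^sub>R (cnj K0 * z)"
      by (simp add: scaleR_conv_of_real ac_simps)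
    moreover have "- \<sigma> / m * (bx - by) = \<sigma> * (by - bx) / m"
      by (metis minus_diff_eq minus_mult_commute times_divide_eq_left)
    ultimately show ?thesis by (simp only: scaleR_complex.sel)
  qed
  have "\<sigma> * (by - \<beta>) / m \<le> \<sigma> * (by - bx) / m"
    using x \<open>0 < m\<close> by (intro divide_right_mono) (simp_all add: algebra_simps)
  moreover have "m ^ 2 / 2 \<le> Re (cnj K0 * z)" unfolding m_def by (rule Re_cnj_mult_ge[OF close])
  moreover have "0 \<le> \<sigma> * (by - \<beta>) / m" using y \<open>0 < m\<close> by simp
  ultimately have "\<sigma> * (by - \<beta>) / m * (m ^ 2 / 2) \<le> \<sigma> * (by - bx) / m * Re (cnj K0 * z)"
    by (intro mult_mono) simp_all
  also have "\<sigma> * (by - \<beta>) / m * (m ^ 2 / 2) = m / 2 * (\<sigma> * (by - \<beta>))"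
    using \<open>0 < m\<close> by (simp add: power2_eq_square)
  finally show ?thesis unfolding Re_eq[unfolded m_def] m_def .
qed

lemma borel_measurable_indicator_continuous_on_Times:
  fixes K :: "'a::euclidean_space \<Rightarrow> 'b::euclidean_space \<Rightarrow> 'c::real_normed_vector"
  assumes "closed P" "closed R" "continuous_on (P \<times> R) (\<lambda>z. K (fst z) (snd z))"
  shows "(\<lambda>z. indicator (P \<times> R) z *\<^sub>R K (fst z) (snd z)) \<in> borel_measurable (lborel \<Otimes>\<^sub>M lborel)"
proof -
  have sets: "sets (lborel \<Otimes>\<^sub>M lborel) = sets (borel :: ('a \<times> 'b) measure)"
    unfolding borel_prod[symmetric] by (rule sets_pair_measure_cong) simp_all
  have "(\<lambda>z. indicator (P \<times> R) z *\<^sub>R K (fst z) (snd z)) \<in> borel_measurable borel"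
    using assms(3) by (rule borel_measurable_continuous_on_indicator[OF borel_closed[OF closed_Times[OF assms(1,2)]]])
  then show ?thesis unfolding measurable_cong_sets[OF sets refl] .
qed

lemma bil_eq_integrable_iterated:
  fixes K :: "real^3 \<Rightarrow> real^3 \<Rightarrow> complex" and b :: "real^3 \<Rightarrow> real"
  assumes R: "compact R" and P: "compact P"
    and cont: "continuous_on (P \<times> R) (\<lambda>z. K (fst z) (snd z))"
    and b: "b \<in> borel_measurable lborel" "set_integrable lborel R b" "set_integrable lborel P b"
    and f: "f1 \<in> borel_measurable lborel" "f2 \<in> borel_measurable lborel"
      "\<And>y. cmod (f1 y) \<le> 1" "\<And>x. cmod (f2 x) \<le> 1"
  defines "h \<equiv> \<lambda>x y. indicator P x *\<^sub>R (indicator R y *\<^sub>R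
    (complex_of_real (b x - b y) * K x y * f1 y * f2 x))"
  shows "bil K b R P f1 f2 = (\<integral>x. (\<integral>y. h x y \<partial>lborel) \<partial>lborel)"
    and "integrable lborel (h x)" and "integrable lborel (\<lambda>x. \<integral>y. h x y \<partial>lborel)"
proof -
  show "bil K b R P f1 f2 = (\<integral>x. (\<integral>y. h x y \<partial>lborel) \<partial>lborel)"
    unfolding bil_def set_lebesgue_integral_def h_def by (simp only: integral_scaleR_right)
  have sets[measurable]: "b \<in> borel_measurable lborel" "f1 \<in> borel_measurable lborel"
    "f2 \<in> borel_measurable lborel" "R \<in> sets lborel" "P \<in> sets lborel"
    using b f R P by (simp_all add: compact_imp_closed)
  define Kc where "Kc z = indicator (P \<times> R) z *\<^sub>R K (fst z) (snd z)" for z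
  have [measurable]: "Kc \<in> borel_measurable (lborel \<Otimes>\<^sub>M lborel)"
    unfolding Kc_def using R P cont
    by (intro borel_measurable_indicator_continuous_on_Times) (simp_all add: compact_imp_closed)
  have "(\<lambda>(x, y). h x y) = (\<lambda>z. Kc z * (complex_of_real (b (fst z) - b (snd z)) * f1 (snd z) * f2 (fst z)))"
    by (auto simp: fun_eq_iff h_def Kc_def indicator_def)
  then have h_meas: "(\<lambda>(x, y). h x y) \<in> borel_measurable (lborel \<Otimes>\<^sub>M lborel)"
    by simp
  obtain k where "0 < k" and K_le: "\<And>x y. x \<in> P \<Longrightarrow> y \<in> R \<Longrightarrow> cmod (K x y) \<le> k"
    using compact_continuous_image[OF cont compact_Times[OF P R]]
    by (fastforce dest!: compact_imp_bounded simp: bounded_pos)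
  have h_bound: "norm (h x y) \<le> (k * (indicator P x * \<bar>b x\<bar>)) * indicator R y
      + (k * indicator P x) * (indicator R y * \<bar>b y\<bar>)" for x y
  proof (cases "x \<in> P \<and> y \<in> R")
    case True
    have "norm (h x y) \<le> \<bar>b x - b y\<bar> * cmod (K x y) * (cmod (f1 y) * cmod (f2 x))"
      using True by (simp add: h_def norm_mult flip: of_real_diff)
    also have "\<dots> \<le> (\<bar>b x\<bar> + \<bar>b y\<bar>) * k * (1 * 1)"
      using True K_le f \<open>0 < k\<close> by (intro mult_mono abs_triangle_ineq4) auto
    finally show ?thesis using True by (simp add: algebra_simps)
  qed (auto simp: h_def)
  have "integrable lborel (\<lambda>x. indicator S x * \<bar>b x\<bar>)" if "set_integrable lborel S b" for S
    using set_integrable_abs[OF that] unfolding set_integrable_def by simp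
  moreover have "integrable lborel (indicator S :: real^3 \<Rightarrow> real)" if "compact S" for S
    using that emeasure_compact_finite[OF that] by (simp add: compact_imp_closed)
  ultimately show "integrable lborel (h x)" "integrable lborel (\<lambda>x. \<integral>y. h x y \<partial>lborel)"
    using integrable_iterated_of_bound[OF lborel.sigma_finite_measure_axioms h_meas _ _ _ _ h_bound]
      b(2,3) R P by auto
qed
lemma cmod_bil_indicator_ge:
  fixes K :: "real^3 \<Rightarrow> real^3 \<Rightarrow> complex" and b :: "real^3 \<Rightarrow> real" and \<beta> \<sigma> :: real
  assumes R: "compact R" and P: "compact P"
    and cont: "continuous_on (P \<times> R) (\<lambda>z. K (fst z) (snd z))"
    and close: "\<And>x y. x \<in> P \<Longrightarrow> y \<in> R \<Longrightarrow> cmod (K x y - K0) \<le> cmod K0 / 2" and "K0 \<noteq> 0"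
    and b: "b \<in> borel_measurable lborel" "set_integrable lborel R b" "set_integrable lborel P b"
    and \<sigma>: "\<sigma> = 1 \<or> \<sigma> = -1"
  defines "E \<equiv> {y \<in> R. 0 \<le> \<sigma> * (b y - \<beta>)}" and "F \<equiv> {x \<in> P. \<sigma> * (b x - \<beta>) \<le> 0}"
  shows "cmod K0 / 2 * measure lborel F * (\<integral>y. indicator R y * max 0 (\<sigma> * (b y - \<beta>)) \<partial>lborel)
           \<le> cmod (bil K b R P (indicator E) (indicator F))"
proof -
  have [measurable]: "b \<in> borel_measurable lborel" "R \<in> sets lborel" "P \<in> sets lborel"
    using b R P by (simp_all add: compact_imp_closed)
  have EF[measurable]: "E \<in> sets lborel" "F \<in> sets lborel" unfolding E_def F_def by measurable
  have "emeasure lborel F \<le> emeasure lborel P"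
    using P by (intro emeasure_mono) (auto simp: F_def compact_imp_closed)
  then have "emeasure lborel F < \<infinity>" using emeasure_compact_finite[OF P] by simp
  define h where "h x y = indicator P x *\<^sub>R (indicator R y *\<^sub>R
    (complex_of_real (b x - b y) * K x y * indicator E y * indicator F x))" for x y
  have "(indicator E :: real^3 \<Rightarrow> complex) \<in> borel_measurable lborel"
    "(indicator F :: real^3 \<Rightarrow> complex) \<in> borel_measurable lborel"
    "\<And>y. cmod (indicator E y :: complex) \<le> 1" "\<And>x. cmod (indicator F x :: complex) \<le> 1"
    by (simp_all add: indicator_def)
  note h = bil_eq_integrable_iterated[OF R P cont b this, folded h_def]
  \<comment> \<open>As K is close to K0 on P \<times> R, this rotation makes the integrand almost real and of one sign.\<close>
  define c where "c = complex_of_real (- \<sigma> / cmod K0) * cnj K0"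
  have "cmod c = 1" using \<sigma> \<open>K0 \<noteq> 0\<close> by (auto simp: c_def norm_mult norm_divide)
  define g where "g y = indicator R y * max 0 (\<sigma> * (b y - \<beta>))" for y
  have g_int: "integrable lborel g"
    unfolding g_def using b(2) R emeasure_compact_finite[OF R]
    by (intro integrable_indicator_pos_part) (simp_all add: compact_imp_closed)
  have pointwise: "cmod K0 / 2 * indicator F x * g y \<le> Re (c * h x y)" for x y
  proof (cases "x \<in> F \<and> y \<in> E")
    case True
    then have "x \<in> P" "y \<in> R" "\<sigma> * (b x - \<beta>) \<le> 0" "0 \<le> \<sigma> * (b y - \<beta>)"
      by (auto simp: E_def F_def)
    then show ?thesis
      using Re_rotated_kernel_ge[OF close \<open>K0 \<noteq> 0\<close>] True
      by (simp add: g_def h_def c_def mult.assoc)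
  next
    case False
    then have "cmod K0 / 2 * indicator F x * g y = 0" "h x y = 0"
      by (auto simp: g_def h_def E_def F_def indicator_def)
    then show ?thesis by (metis mult_zero_right order_refl zero_complex.sel(1))
  qed
  have "(\<integral>x. cmod K0 / 2 * indicator F x \<partial>lborel) * (\<integral>y. g y \<partial>lborel)
      \<le> Re (\<integral>x. (\<integral>y. c * h x y \<partial>lborel) \<partial>lborel)"
    using h(2,3) g_int \<open>emeasure lborel F < \<infinity>\<close> EF pointwise
    by (intro integral_mult_le_Re_iterated) (auto simp: mult.assoc)
  also have "\<dots> = Re (c * bil K b R P (indicator E) (indicator F))"
    unfolding h(1) by simp
  also have "\<dots> \<le> cmod (bil K b R P (indicator E) (indicator F))"
    using complex_Re_le_cmod[of "c * _"] \<open>cmod c = 1\<close> by (simp add: norm_mult)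
  finally show ?thesis using \<open>emeasure lborel F < \<infinity>\<close> by (simp add: g_def)
qed

lemma osc_nonneg: "0 \<le> osc b R"
  unfolding osc_def set_lebesgue_integral_def
  by (intro divide_nonneg_nonneg integral_nonneg_AE) (auto simp: indicator_def)

lemma osc_le_bil:
  fixes K :: "real^3 \<Rightarrow> real^3 \<Rightarrow> complex" and b :: "real^3 \<Rightarrow> real"
  assumes R: "compact R" "0 < measure lborel R" and P: "compact P" "measure lborel P = measure lborel R"
    and cont: "continuous_on (P \<times> R) (\<lambda>z. K (fst z) (snd z))"
    and close: "\<And>x y. x \<in> P \<Longrightarrow> y \<in> R \<Longrightarrow> cmod (K x y - K0) \<le> cmod K0 / 2" and "K0 \<noteq> 0"
    and b: "locally_integrable b"
  obtains E F where "E \<in> sets lborel" "F \<in> sets lborel"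
    "cmod K0 * measure lborel R ^ 2 * osc b R / 8 \<le> cmod (bil K b R P (indicator E) (indicator F))"
proof -
  define m where "m = measure lborel R"
  have b_meas[measurable]: "b \<in> borel_measurable lborel"
    using b by (rule locally_integrable_borel_measurable)
  have bR: "set_integrable lborel R b" and bP: "set_integrable lborel P b"
    using b R P unfolding locally_integrable_def by auto
  have R_sets: "R \<in> sets lborel" "emeasure lborel R < \<infinity>"
    and P_sets: "P \<in> sets lborel" "emeasure lborel P < \<infinity>"
    using R P emeasure_compact_finite by (auto simp: compact_imp_closed)
  define \<beta> where "\<beta> = avg b R"
  obtain \<sigma> :: real where \<sigma>: "\<sigma> = 1 \<or> \<sigma> = -1"
    and F_big: "measure lborel P / 2 \<le> measure lborel {x \<in> P. \<sigma> * (b x - \<beta>) \<le> 0}"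
    using exists_sign_half_measure[OF P_sets, of "\<lambda>x. b x - \<beta>"] by auto
  define E where "E = {y \<in> R. 0 \<le> \<sigma> * (b y - \<beta>)}"
  define F where "F = {x \<in> P. \<sigma> * (b x - \<beta>) \<le> 0}"
  define I where "I = (\<integral>y. indicator R y * max 0 (\<sigma> * (b y - \<beta>)) \<partial>lborel)"
  have "cmod K0 / 2 * measure lborel F * I \<le> cmod (bil K b R P (indicator E) (indicator F))"
    unfolding I_def E_def F_def
    using cmod_bil_indicator_ge[OF R(1) P(1) cont close \<open>K0 \<noteq> 0\<close> b_meas bR bP \<sigma>] .
  moreover have "cmod K0 / 2 * (m / 2) * I \<le> cmod K0 / 2 * measure lborel F * I"
  proof -
    have "0 \<le> I" unfolding I_def by (intro integral_nonneg_AE) (auto simp: indicator_def)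
    then show ?thesis
      using F_big P(2) by (intro mult_right_mono mult_left_mono) (auto simp: F_def m_def)
  qed
  moreover have "I = osc b R * m / 2"
    using set_integral_abs_diff_avg[OF bR R_sets R(2) \<sigma>] R(2)
    by (simp add: osc_def I_def \<beta>_def m_def)
  moreover have "E \<in> sets lborel" "F \<in> sets lborel"
    unfolding E_def F_def using R_sets P_sets by measurable
  ultimately show ?thesis
    using that by (simp add: m_def power2_eq_square mult_ac)
qed

lemma bil_le_Off:
  assumes "adm_pair C0 P1 P2" "f1 \<in> borel_measurable lborel" "f2 \<in> borel_measurable lborel"
    "\<And>y. cmod (f1 y) \<le> 1" "\<And>x. cmod (f2 x) \<le> 1"
  shows "ereal (cmod (bil K b P1 P2 f1 f2) / measure lborel P1 powr (1 + 1/u - 1/t)) \<le> Off K b C0 u t"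
  unfolding Off_def using assms by (intro SUP_upper2[of "(P1, P2, f1, f2)"]) auto

lemma ereal_le_mult_powr_split:
  assumes "0 < m" "0 \<le> k" "x \<le> k * (B / m)" "ereal (B / m powr (1 + e)) \<le> Q"
  shows "ereal x \<le> ereal k * Q * ereal (m powr e)"
proof -
  have "B / m = B / m powr (1 + e) * m powr e"
    using \<open>0 < m\<close> by (simp add: powr_add field_simps)
  then have "ereal x \<le> ereal k * ereal (B / m powr (1 + e)) * ereal (m powr e)"
    using assms(3) by (simp add: mult.assoc)
  also have "\<dots> \<le> ereal k * Q * ereal (m powr e)"
    using assms(2,4) by (intro ereal_mult_right_mono ereal_mult_left_mono) auto
  finally show ?thesis .
qed

context nondegenerate_zygmund_kernel
begin

lemma osc_le_Off:
  assumes A: "4 \<le> A" "\<omega> (4 / A) < c / (64 * C)" and b: "locally_integrable b" and R: "zyg_rect R"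
  shows "ereal (osc b R) \<le> ereal (8 * A^4 / c) * Off K b (max 1 (C / c) * A^2) u t
           * ereal (measure lborel R powr (1/u - 1/t))"
proof -
  define m where "m = measure lborel R"
  obtain P K0 where adm: "adm_pair (max 1 (C / c) * A^2) R P" and P: "compact P"
    "measure lborel P = measure lborel R"
    and cont: "continuous_on (P \<times> R) (\<lambda>z. K (fst z) (snd z))"
    and close: "\<And>x y. x \<in> P \<Longrightarrow> y \<in> R \<Longrightarrow> cmod (K x y - K0) \<le> cmod K0 / 2"
    and large: "c / (A^4 * m) \<le> cmod K0"
    using kernel_nearly_constant_on_far_box[OF A R] unfolding m_def by blast
  have R': "compact R" "0 < m" using R by (simp_all add: zyg_rect_compact zyg_rect_measure_pos m_def)
  have "0 < c / (A^4 * m)" using c_pos R'(2) A(1) by simp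
  then have "K0 \<noteq> 0" using large by auto
  obtain E F where EF: "E \<in> sets lborel" "F \<in> sets lborel"
    and bil_ge: "cmod K0 * m^2 * osc b R / 8 \<le> cmod (bil K b R P (indicator E) (indicator F))"
    using osc_le_bil[OF R'[unfolded m_def] P cont close \<open>K0 \<noteq> 0\<close> b] unfolding m_def by blast
  define B where "B = cmod (bil K b R P (indicator E) (indicator F))"
  have "c * m * osc b R / (8 * A^4) = c / (A^4 * m) * m^2 * osc b R / 8"
    using R'(2) A(1) by (simp add: power2_eq_square)
  also have "\<dots> \<le> cmod K0 * m^2 * osc b R / 8"
    using large osc_nonneg[of b R] by (intro divide_right_mono mult_right_mono) auto
  also have "\<dots> \<le> B" using bil_ge by (simp add: B_def)
  finally have "c * m * osc b R \<le> 8 * A^4 * B"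
    using A(1) by (simp add: pos_divide_le_eq mult.commute)
  then have "osc b R \<le> 8 * A^4 / c * (B / m)"
    using c_pos R'(2) by (simp add: field_simps)
  moreover have "ereal (B / m powr (1 + 1/u - 1/t)) \<le> Off K b (max 1 (C / c) * A^2) u t"
    unfolding B_def m_def using EF by (intro bil_le_Off[OF adm]) (auto simp: indicator_def)
  ultimately show ?thesis
    using ereal_le_mult_powr_split[OF R'(2), of "8 * A^4 / c" "osc b R" B "1/u - 1/t"] c_pos
    by (simp add: m_def add_diff_eq)
qed

end

theorem mainTheorem3:
  fixes \<theta> :: real and K :: "real^3 \<Rightarrow> real^3 \<Rightarrow> complex"
  assumes "0 < \<theta>" and "\<theta> \<le> 1"
    and "zygmund_kernel \<theta> K" and "non_degenerate K"
  shows "\<exists>C0\<ge>1. \<exists>C>0. \<forall>(b::real^3 \<Rightarrow> real) (u::real) (t::real) R.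
           locally_integrable b \<and> 1 < u \<and> 1 < t \<and> zyg_rect R \<longrightarrow>
           ereal (osc b R) \<le> ereal C * Off K b C0 u t * ereal (measure lborel R powr (1/u - 1/t))"
proof -
  obtain C \<omega> where "zygmund_kernel_bounds \<theta> K C \<omega>"
    using zygmund_kernel_boundsE[OF assms(1,3)] by blast
  then obtain c where "nondegenerate_zygmund_kernel \<theta> K C \<omega> c"
    using nondegenerate_zygmund_kernelE assms(4) by blast
  then interpret nondegenerate_zygmund_kernel \<theta> K C \<omega> c .
  obtain A where A: "4 \<le> A" "\<omega> (4 / A) < c / (64 * C)"
    using exists_scale_small_modulus[of "c / (64 * C)"] c_pos C_pos by auto
  have "1 \<le> max 1 (C / c) * A^2" using A(1) by (intro one_le_max_mult_square) simp
  moreover have "0 < 8 * A^4 / c" using c_pos A(1) by simp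
  ultimately show ?thesis using osc_le_Off[OF A] by blast
qed

end
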